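(* For every $\varepsilon>0$ there exists $n_0$ such that for all $n\ge n_0$ the following holds. Let $\mathcal F\subseteq 2^{[n]}$ be a family all of whose sets have size in $[n/2-n^{2/3},\,n/2+n^{2/3}]$. If for every $F\in\mathcal F$ we have (i) $\nabla^1_{\mathcal F}(F)\le\varepsilon n$ and (ii) $\nabla^j_{\mathcal F}(F)\le\varepsilon n^2$ for all $j\ge2$, then $|\mathcal F|\le(1+15\varepsilon)\binom{n}{\lfloor n/2\rfloor}$.
   Context: $\nabla^j_{\mathcal F}(F):=|\{G\in\mathcal F:\ F\subseteq G,\ |G|=|F|+j\}|$. *)

theory Defs
  imports Complex_Main
begin

definition nabla :: "nat \<Rightarrow> 'a set set \<Rightarrow> 'a set \<Rightarrow> nat" where
  "nabla j \<F> F = card {G \<in> \<F>. F \<subseteq> G \<and> card G = card F + j}"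

end

theory Submission
  imports Defs "HOL-Combinatorics.Multiset_Permutations"
begin

text \<open>
  A maximal chain of subsets of \<open>[n]\<close>, chosen uniformly at random, meets \<open>\<F>\<close> in
  \<open>\<Sum>F\<in>\<F>. 1 / (n choose |F|)\<close> members on average. Classify the chains by the first member \<open>F\<close>
  of \<open>\<F>\<close> they meet: above \<open>F\<close> such a chain is a uniform maximal chain from \<open>F\<close> to \<open>[n]\<close>, so
  it meets on average \<open>\<Sum>G\<supset>F. 1 / (n - |F| choose |G| - |F|) = \<Sum>j. \<nabla>\<^sup>j(F) / (n - |F| choose j)\<close>
  further members. As all sizes lie within \<open>t = n powr (2/3)\<close> of \<open>n/2\<close>, only \<open>j \<le> 2t\<close> contribute,
  and the shadow bounds make this sum at most \<open>15\<epsilon>\<close>. Hence \<open>\<Sum>F\<in>\<F>. 1 / (n choose |F|) \<le> 1 + 15\<epsilon>\<close>,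
  and the central binomial coefficient is the largest one.
\<close>

lemma sum_card_Collect_swap:
  assumes "finite A" "finite B"
  shows "(\<Sum>x\<in>A. card {y\<in>B. R x y}) = (\<Sum>y\<in>B. card {x\<in>A. R x y})"
proof -
  have "(\<Sum>x\<in>A. card {y\<in>B. R x y}) = (\<Sum>x\<in>A. \<Sum>y\<in>B. if R x y then 1 else 0)"
    using assms(2) by (simp add: sum.If_cases Int_def)
  also have "\<dots> = (\<Sum>y\<in>B. \<Sum>x\<in>A. if R x y then 1 else 0)"
    by (rule sum.swap)
  also have "\<dots> = (\<Sum>y\<in>B. card {x\<in>A. R x y})"
    using assms(1) by (simp add: sum.If_cases Int_def)
  finally show ?thesis .
qed

text \<open>A permutation \<open>xs\<close> of \<open>U\<close> stands for the maximal chain of its prefix sets \<open>set (take i xs)\<close>.\<close>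

definition on_chain :: "'a list \<Rightarrow> 'a set \<Rightarrow> bool" where
  "on_chain xs G \<longleftrightarrow> set (take (card G) xs) = G"

definition first_on_chain :: "'a set set \<Rightarrow> 'a list \<Rightarrow> 'a set \<Rightarrow> bool" where
  "first_on_chain \<F> xs F \<longleftrightarrow> on_chain xs F \<and> (\<forall>i<card F. set (take i xs) \<notin> \<F>)"

lemma on_chain_subset:
  assumes "on_chain xs F" "on_chain xs G" "card F \<le> card G"
  shows "F \<subseteq> G"
  using assms set_take_subset_set_take[of "card F" "card G" xs] by (auto simp: on_chain_def)

lemma first_on_chain_card_le:
  assumes "first_on_chain \<F> xs F" "G \<in> \<F>" "on_chain xs G"
  shows "card F \<le> card G"
  using assms by (auto simp: first_on_chain_def on_chain_def not_less[symmetric])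

lemma first_on_chain_unique:
  assumes "first_on_chain \<F> xs F" "first_on_chain \<F> xs F'" "F \<in> \<F>" "F' \<in> \<F>"
  shows "F = F'"
proof -
  have "card F = card F'"
    using first_on_chain_card_le assms by (metis first_on_chain_def le_antisym)
  then show ?thesis
    using assms by (simp add: first_on_chain_def on_chain_def)
qed

lemma first_on_chain_exists:
  assumes "distinct xs" "G \<in> \<F>" "on_chain xs G"
  obtains F where "F \<in> \<F>" "first_on_chain \<F> xs F" "F \<subseteq> G"
proof -
  have G_in: "set (take (card G) xs) \<in> \<F>"
    using assms by (simp add: on_chain_def)
  then obtain k where k: "set (take k xs) \<in> \<F>" "\<forall>i<k. set (take i xs) \<notin> \<F>"
    using exists_least_iff[of "\<lambda>k. set (take k xs) \<in> \<F>"] by blast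
  have "k \<le> card G"
    using k(2) G_in by (meson not_le)
  moreover have "card G \<le> length xs"
    using assms(3) by (metis on_chain_def card_length length_take min.bounded_iff)
  ultimately have card_k: "card (set (take k xs)) = k"
    using assms(1) by (simp add: distinct_card)
  show ?thesis
  proof
    show "set (take k xs) \<in> \<F>" by (fact k(1))
    show "first_on_chain \<F> xs (set (take k xs))"
      using k(2) card_k by (simp add: first_on_chain_def on_chain_def)
    show "set (take k xs) \<subseteq> G"
      using assms(3) \<open>k \<le> card G\<close> set_take_subset_set_take unfolding on_chain_def by metis
  qed
qed

lemma card_on_chain_le:
  assumes "distinct xs" "finite \<F>"
  shows "card {G\<in>\<F>. on_chain xs G} \<le>
    (\<Sum>F\<in>\<F>. if first_on_chain \<F> xs F then 1 + card {G\<in>\<F>. F \<subset> G \<and> on_chain xs G} else 0)"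
    (is "_ \<le> sum ?w \<F>")
proof (cases "{G\<in>\<F>. on_chain xs G} = {}")
  case True
  then show ?thesis by (simp only: card.empty zero_le)
next
  case False
  then obtain G where "G \<in> \<F>" "on_chain xs G" by auto
  then obtain F where F: "F \<in> \<F>" "first_on_chain \<F> xs F"
    using first_on_chain_exists assms(1) by metis
  have "F \<subseteq> G" if "G \<in> \<F>" "on_chain xs G" for G
    using F(2) that on_chain_subset first_on_chain_card_le unfolding first_on_chain_def by blast
  then have "{G\<in>\<F>. on_chain xs G} \<subseteq> insert F {G\<in>\<F>. F \<subset> G \<and> on_chain xs G}"
    by blast
  then have "card {G\<in>\<F>. on_chain xs G} \<le> card (insert F {G\<in>\<F>. F \<subset> G \<and> on_chain xs G})"
    using assms(2) by (intro card_mono) auto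
  also have "\<dots> \<le> 1 + card {G\<in>\<F>. F \<subset> G \<and> on_chain xs G}"
    by (simp add: card_insert_le_m1 card_insert_if assms(2))
  also have "\<dots> = ?w F"
    using F(2) by simp
  also have "\<dots> \<le> sum ?w \<F>"
    using F(1) assms(2) by (intro member_le_sum) auto
  finally show ?thesis .
qed

lemma card_permutations_of_set_split:
  assumes "finite U" "F \<subseteq> U"
  shows "card {xs \<in> permutations_of_set U. on_chain xs F \<and> P (take (card F) xs) \<and> Q (drop (card F) xs)}
       = card {p \<in> permutations_of_set F. P p} * card {q \<in> permutations_of_set (U - F). Q q}"
proof -
  let ?k = "card F"
  let ?A = "{p \<in> permutations_of_set F. P p} \<times> {q \<in> permutations_of_set (U - F). Q q}"
  have "{xs \<in> permutations_of_set U. on_chain xs F \<and> P (take ?k xs) \<and> Q (drop ?k xs)}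
      = (\<lambda>(p, q). p @ q) ` ?A"
  proof (intro equalityI subsetI)
    fix xs assume "xs \<in> {xs \<in> permutations_of_set U. on_chain xs F \<and> P (take ?k xs) \<and> Q (drop ?k xs)}"
    then have xs: "distinct xs" "set xs = U" "set (take ?k xs) = F" "P (take ?k xs)" "Q (drop ?k xs)"
      by (auto simp: permutations_of_set_def on_chain_def)
    have "set (take ?k xs) \<inter> set (drop ?k xs) = {}"
      using set_take_disj_set_drop_if_distinct[OF xs(1)] by auto
    moreover have "set (take ?k xs) \<union> set (drop ?k xs) = U"
      using xs(2) by (metis append_take_drop_id set_append)
    ultimately have "set (drop ?k xs) = U - F"
      using xs(3) by auto
    with xs have "(take ?k xs, drop ?k xs) \<in> ?A"
      by (auto simp: permutations_of_set_def)
    then show "xs \<in> (\<lambda>(p, q). p @ q) ` ?A"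
      by (intro image_eqI[where x = "(take ?k xs, drop ?k xs)"]) auto
  next
    fix xs assume "xs \<in> (\<lambda>(p, q). p @ q) ` ?A"
    then obtain p q where xs: "xs = p @ q" and p: "set p = F" "distinct p" "P p"
      and q: "set q = U - F" "distinct q" "Q q"
      by (auto simp: permutations_of_set_def)
    have "length p = ?k"
      using p distinct_card by metis
    then show "xs \<in> {xs \<in> permutations_of_set U. on_chain xs F \<and> P (take ?k xs) \<and> Q (drop ?k xs)}"
      using xs p q assms(2) by (auto simp: permutations_of_set_def on_chain_def)
  qed
  moreover have "inj_on (\<lambda>(p, q). p @ q) ?A"
  proof (rule inj_onI, clarsimp)
    fix p q p' q'
    assume "p \<in> permutations_of_set F" "p' \<in> permutations_of_set F" "p @ q = p' @ q'"
    moreover from this have "length p = length p'"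
      by (metis distinct_card permutations_of_setD)
    ultimately show "p = p' \<and> q = q'" by simp
  qed
  ultimately show ?thesis
    by (simp add: card_image card_cartesian_product)
qed

lemma card_permutations_of_set_on_chain:
  assumes "finite U" "F \<subseteq> U"
  shows "card {xs \<in> permutations_of_set U. on_chain xs F} = fact (card F) * fact (card U - card F)"
  using card_permutations_of_set_split[OF assms, of "\<lambda>_. True" "\<lambda>_. True"] assms
  by (simp add: card_Diff_subset finite_subset)

definition chains_first_at :: "'a set \<Rightarrow> 'a set set \<Rightarrow> 'a set \<Rightarrow> 'a list set" where
  "chains_first_at U \<F> F = {xs \<in> permutations_of_set U. first_on_chain \<F> xs F}"

lemma sum_card_chains_first_at_le:
  assumes "finite U" "finite \<F>"
  shows "(\<Sum>F\<in>\<F>. card (chains_first_at U \<F> F)) \<le> fact (card U)"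
proof -
  have "(\<Sum>F\<in>\<F>. card (chains_first_at U \<F> F)) = card (\<Union>F\<in>\<F>. chains_first_at U \<F> F)"
    using assms first_on_chain_unique
    by (intro card_UN_disjoint[symmetric]) (auto simp: chains_first_at_def)
  also have "\<dots> \<le> card (permutations_of_set U)"
    by (intro card_mono) (auto simp: chains_first_at_def)
  finally show ?thesis
    using assms(1) by simp
qed

lemma first_on_chain_iff_take:
  "first_on_chain \<F> xs F \<longleftrightarrow> on_chain xs F \<and> (\<forall>i<card F. set (take i (take (card F) xs)) \<notin> \<F>)"
  by (auto simp: first_on_chain_def min_def)

lemma on_chain_iff_on_chain_drop:
  assumes "distinct xs" "on_chain xs F" "F \<subset> G" "finite G"
  shows "on_chain xs G \<longleftrightarrow> on_chain (drop (card F) xs) (G - F)"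
proof -
  have "card F < card G"
    using assms(4,3) by (rule psubset_card_mono)
  then have "take (card G) xs = take (card F) xs @ take (card G - card F) (drop (card F) xs)"
    by (metis le_add_diff_inverse less_imp_le take_add)
  then have "set (take (card G) xs) = F \<union> set (take (card G - card F) (drop (card F) xs))"
    using assms(2) by (simp add: on_chain_def)
  moreover have "F \<inter> set (drop (card F) xs) = {}"
    using assms(1,2) set_take_disj_set_drop_if_distinct[of xs] by (auto simp: on_chain_def)
  moreover have "card (G - F) = card G - card F"
    using assms(3,4) by (meson card_Diff_subset finite_subset psubset_imp_subset)
  ultimately show ?thesis
    using assms(3) set_take_subset[of "card G - card F" "drop (card F) xs"] by (auto simp: on_chain_def)
qed

lemma card_chains_first_at:
  assumes "finite U" "F \<subseteq> U"
  shows "card (chains_first_at U \<F> F)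
       = card {p \<in> permutations_of_set F. \<forall>i<card F. set (take i p) \<notin> \<F>} * fact (card U - card F)"
  using card_permutations_of_set_split[OF assms, of "\<lambda>p. \<forall>i<card F. set (take i p) \<notin> \<F>" "\<lambda>_. True"] assms
  by (simp add: chains_first_at_def first_on_chain_iff_take card_Diff_subset finite_subset)

lemma card_chains_first_at_through:
  assumes "finite U" "F \<subset> G" "G \<subseteq> U"
  shows "card {xs \<in> chains_first_at U \<F> F. on_chain xs G}
       = card {p \<in> permutations_of_set F. \<forall>i<card F. set (take i p) \<notin> \<F>}
         * (fact (card G - card F) * fact (card U - card G))"
proof -
  have FU: "F \<subseteq> U" and "finite G"
    using assms finite_subset by auto
  have "card F < card G"
    using \<open>finite G\<close> assms(2) by (rule psubset_card_mono)
  have "card G \<le> card U"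
    using assms(1,3) by (rule card_mono)
  have "card (G - F) = card G - card F"
    using assms(2) \<open>finite G\<close> by (meson card_Diff_subset finite_subset psubset_imp_subset)
  have "{xs \<in> chains_first_at U \<F> F. on_chain xs G}
      = {xs \<in> permutations_of_set U. on_chain xs F \<and> (\<forall>i<card F. set (take i (take (card F) xs)) \<notin> \<F>)
           \<and> on_chain (drop (card F) xs) (G - F)}"
    using on_chain_iff_on_chain_drop[OF _ _ assms(2) \<open>finite G\<close>]
    by (auto simp: chains_first_at_def first_on_chain_iff_take permutations_of_set_def)
  also have "card \<dots> = card {p \<in> permutations_of_set F. \<forall>i<card F. set (take i p) \<notin> \<F>}
      * card {q \<in> permutations_of_set (U - F). on_chain q (G - F)}"
    by (rule card_permutations_of_set_split[OF assms(1) FU])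
  also have "card {q \<in> permutations_of_set (U - F). on_chain q (G - F)}
      = fact (card G - card F) * fact (card U - card G)"
    using card_permutations_of_set_on_chain[of "U - F" "G - F"] assms FU
      \<open>card F < card G\<close> \<open>card G \<le> card U\<close> \<open>card (G - F) = card G - card F\<close>
    by (simp add: Diff_mono card_Diff_subset finite_subset)
  finally show ?thesis .
qed

text \<open>
  Whether \<open>F\<close> comes first on the chain depends only on the first \<open>card F\<close> entries of the
  permutation, whether the chain passes through \<open>G\<close> only on the rest; so, given the former,
  the latter has the probability \<open>1 / (card U - card F choose card G - card F)\<close> of a
  uniform chain from \<open>F\<close> to \<open>U\<close>.
\<close>

lemma card_chains_first_at_on_chain:
  assumes "finite U" "F \<subset> G" "G \<subseteq> U"
  shows "real (card {xs \<in> chains_first_at U \<F> F. on_chain xs G})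
       = real (card (chains_first_at U \<F> F)) / real ((card U - card F) choose (card G - card F))"
proof -
  have "card F < card G"
    using assms by (meson finite_subset psubset_card_mono)
  moreover have "card G \<le> card U"
    using assms(1,3) by (rule card_mono)
  ultimately have "real ((card U - card F) choose (card G - card F))
      = fact (card U - card F) / (fact (card G - card F) * fact (card U - card G))"
    and "(card U - card F) choose (card G - card F) > 0"
    by (simp_all add: binomial_fact)
  then show ?thesis
    using assms by (simp add: card_chains_first_at card_chains_first_at_through field_simps)
qed

lemma sum_fact_le_chains_first_at:
  assumes "finite U" "\<F> \<subseteq> Pow U"
  shows "(\<Sum>F\<in>\<F>. fact (card F) * fact (card U - card F))
    \<le> (\<Sum>F\<in>\<F>. card (chains_first_at U \<F> F)
          + (\<Sum>G\<in>{G\<in>\<F>. F \<subset> G}. card {xs \<in> chains_first_at U \<F> F. on_chain xs G}))"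
proof -
  let ?P = "permutations_of_set U"
  have fin: "finite \<F>"
    using assms finite_Pow_iff finite_subset by metis
  have "(\<Sum>F\<in>\<F>. fact (card F) * fact (card U - card F)) = (\<Sum>F\<in>\<F>. card {xs \<in> ?P. on_chain xs F})"
    using assms card_permutations_of_set_on_chain[OF assms(1)] by (intro sum.cong) auto
  also have "\<dots> = (\<Sum>xs\<in>?P. card {F \<in> \<F>. on_chain xs F})"
    using fin by (intro sum_card_Collect_swap[symmetric]) auto
  also have "\<dots> \<le> (\<Sum>xs\<in>?P. \<Sum>F\<in>\<F>.
      if first_on_chain \<F> xs F then 1 + card {G\<in>\<F>. F \<subset> G \<and> on_chain xs G} else 0)"
    using fin by (intro sum_mono card_on_chain_le) (auto simp: permutations_of_set_def)
  also have "\<dots> = (\<Sum>F\<in>\<F>. \<Sum>xs\<in>chains_first_at U \<F> F. 1 + card {G\<in>\<F>. F \<subset> G \<and> on_chain xs G})"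
    unfolding chains_first_at_def by (subst sum.swap) (simp only: sum.inter_filter[OF finite_permutations_of_set])
  also have "\<dots> = (\<Sum>F\<in>\<F>. card (chains_first_at U \<F> F)
          + (\<Sum>xs\<in>chains_first_at U \<F> F. card {G\<in>{G\<in>\<F>. F \<subset> G}. on_chain xs G}))"
    by (simp only: sum.distrib) (simp add: conj_assoc)
  also have "\<dots> = (\<Sum>F\<in>\<F>. card (chains_first_at U \<F> F)
          + (\<Sum>G\<in>{G\<in>\<F>. F \<subset> G}. card {xs \<in> chains_first_at U \<F> F. on_chain xs G}))"
    using fin by (intro sum.cong refl arg_cong2[where f = "(+)"] sum_card_Collect_swap)
      (auto simp: chains_first_at_def)
  finally show ?thesis .
qed

lemma LYM_inequality_overlaps:
  fixes \<delta> :: real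
  assumes U: "finite U" "\<F> \<subseteq> Pow U" and "\<delta> \<ge> 0"
    and overlaps: "\<And>F. F \<in> \<F> \<Longrightarrow>
      (\<Sum>G\<in>{G\<in>\<F>. F \<subset> G}. 1 / real ((card U - card F) choose (card G - card F))) \<le> \<delta>"
  shows "(\<Sum>F\<in>\<F>. 1 / real (card U choose card F)) \<le> 1 + \<delta>"
proof -
  let ?n = "card U" and ?E = "chains_first_at U \<F>"
  have fin: "finite \<F>"
    using U finite_Pow_iff finite_subset by metis
  have card_le: "card F \<le> ?n" if "F \<in> \<F>" for F
    using U that by (intro card_mono) auto
  have "fact ?n * (\<Sum>F\<in>\<F>. 1 / real (?n choose card F)) = (\<Sum>F\<in>\<F>. real (fact (card F) * fact (?n - card F)))"
    unfolding sum_distrib_left using card_le by (intro sum.cong refl) (simp add: binomial_fact)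
  also have "\<dots> \<le> (\<Sum>F\<in>\<F>. real (card (?E F))
      + (\<Sum>G\<in>{G\<in>\<F>. F \<subset> G}. real (card {xs \<in> ?E F. on_chain xs G})))"
    using sum_fact_le_chains_first_at[OF U] unfolding of_nat_sum[symmetric] of_nat_add[symmetric] of_nat_le_iff .
  also have "\<dots> = (\<Sum>F\<in>\<F>. real (card (?E F))
      * (1 + (\<Sum>G\<in>{G\<in>\<F>. F \<subset> G}. 1 / real ((?n - card F) choose (card G - card F)))))"
  proof (intro sum.cong refl)
    fix F assume "F \<in> \<F>"
    have "real (card {xs \<in> ?E F. on_chain xs G})
        = real (card (?E F)) * (1 / real ((?n - card F) choose (card G - card F)))"
      if "G \<in> {G\<in>\<F>. F \<subset> G}" for G
    proof -
      have "F \<subset> G" "G \<subseteq> U"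
        using that U(2) by auto
      then show ?thesis
        by (simp add: card_chains_first_at_on_chain[OF U(1)])
    qed
    then show "real (card (?E F)) + (\<Sum>G\<in>{G\<in>\<F>. F \<subset> G}. real (card {xs \<in> ?E F. on_chain xs G}))
      = real (card (?E F)) * (1 + (\<Sum>G\<in>{G\<in>\<F>. F \<subset> G}. 1 / real ((?n - card F) choose (card G - card F))))"
      by (simp add: distrib_left sum_distrib_left)
  qed
  also have "\<dots> \<le> (\<Sum>F\<in>\<F>. real (card (?E F)) * (1 + \<delta>))"
    using overlaps by (intro sum_mono mult_left_mono) auto
  also have "\<dots> = (1 + \<delta>) * real (\<Sum>F\<in>\<F>. card (?E F))"
    by (simp add: sum_distrib_left mult.commute)
  also have "\<dots> \<le> (1 + \<delta>) * fact ?n"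
  proof -
    have "real (\<Sum>F\<in>\<F>. card (?E F)) \<le> fact ?n"
      using sum_card_chains_first_at_le[OF U(1) fin] by (metis of_nat_fact of_nat_le_iff)
    then show ?thesis
      using \<open>\<delta> \<ge> 0\<close> by (intro mult_left_mono) auto
  qed
  finally show ?thesis
    by (simp add: mult.commute)
qed

lemma card_le_LYM_sum_mult_central_binomial:
  assumes "finite U" "\<F> \<subseteq> Pow U"
  shows "real (card \<F>) \<le> (\<Sum>F\<in>\<F>. 1 / real (card U choose card F)) * real (card U choose (card U div 2))"
proof -
  have "1 / real (card U choose (card U div 2)) \<le> 1 / real (card U choose card F)" if "F \<in> \<F>" for F
  proof -
    have "card F \<le> card U"
      using that assms by (intro card_mono) auto
    then show ?thesis
      using binomial_maximum[of "card U" "card F"] by (intro divide_left_mono) auto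
  qed
  then have "real (card \<F>) / real (card U choose (card U div 2)) \<le> (\<Sum>F\<in>\<F>. 1 / real (card U choose card F))"
    using sum_mono[of \<F> "\<lambda>_. 1 / real (card U choose (card U div 2))"] by simp
  then show ?thesis
    by (simp add: divide_le_eq)
qed

lemma sum_proper_supersets_by_nabla:
  fixes f :: "nat \<Rightarrow> 'b::comm_semiring_1"
  assumes "finite U" "\<F> \<subseteq> Pow U"
  shows "(\<Sum>G\<in>{G\<in>\<F>. F \<subset> G}. f (card G - card F))
       = (\<Sum>j=1..card U - card F. of_nat (nabla j \<F> F) * f j)"
proof -
  let ?S = "{G\<in>\<F>. F \<subset> G}"
  have "finite \<F>"
    using assms finite_Pow_iff finite_subset by metis
  then have "finite ?S"
    by simp
  have "(\<lambda>G. card G - card F) ` ?S \<subseteq> {1..card U - card F}"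
  proof (rule image_subsetI)
    fix G assume "G \<in> ?S"
    then have "G \<subseteq> U" "F \<subset> G"
      using assms(2) by auto
    then have "card F < card G" "card G \<le> card U"
      using assms(1) by (auto intro: psubset_card_mono card_mono finite_subset)
    then show "card G - card F \<in> {1..card U - card F}"
      by (simp add: diff_le_mono)
  qed
  then have "(\<Sum>G\<in>?S. f (card G - card F))
      = (\<Sum>j=1..card U - card F. \<Sum>G\<in>{G\<in>?S. card G - card F = j}. f (card G - card F))"
    by (rule sum.group[OF \<open>finite ?S\<close> finite_atLeastAtMost, symmetric])
  also have "\<dots> = (\<Sum>j=1..card U - card F. of_nat (nabla j \<F> F) * f j)"
  proof (intro sum.cong refl)
    fix j assume "j \<in> {1..card U - card F}"
    then have "{G\<in>?S. card G - card F = j} = {G\<in>\<F>. F \<subseteq> G \<and> card G = card F + j}"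
      by auto
    then show "(\<Sum>G\<in>{G\<in>?S. card G - card F = j}. f (card G - card F)) = of_nat (nabla j \<F> F) * f j"
      by (simp add: nabla_def)
  qed
  finally show ?thesis .
qed

lemma card_positive_nat_le_real:
  fixes x :: real
  assumes "0 \<le> x"
  shows "real (card {j\<in>A. 0 < j \<and> real j \<le> x}) \<le> x"
proof -
  have "{j\<in>A. 0 < j \<and> real j \<le> x} \<subseteq> {1..nat \<lfloor>x\<rfloor>}"
    by (auto simp: le_nat_floor)
  then have "card {j\<in>A. 0 < j \<and> real j \<le> x} \<le> nat \<lfloor>x\<rfloor>"
    by (metis card_atLeastAtMost card_mono diff_Suc_1 finite_atLeastAtMost)
  then show ?thesis
    using assms by linarith
qed

lemma sum_tail_div_binomial_le:
  fixes N :: "nat \<Rightarrow> nat" and b t :: real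
  assumes "3 \<le> m" "0 \<le> t" "4 * t \<le> real m"
    and bound: "\<And>j. 3 \<le> j \<Longrightarrow> real (N j) \<le> b"
    and vanish: "\<And>j. 2 * t < real j \<Longrightarrow> N j = 0"
  shows "(\<Sum>j=3..m. real (N j) / real (m choose j)) \<le> 2 * t * b / (real m / 3) ^ 3"
proof -
  let ?c = "b / (real m / 3) ^ 3"
  have "0 \<le> b"
    using bound[of 3] by simp
  have summand_le: "real (N j) / real (m choose j) \<le> (if real j \<le> 2 * t then ?c else 0)"
    if "j \<in> {3..m}" for j
  proof (cases "real j \<le> 2 * t")
    case True
    have "(real m / 3) ^ 3 \<le> real (m choose 3)"
      using \<open>3 \<le> m\<close> binomial_ge_n_over_k_pow_k[of 3 m, where 'a = real] by simp
    also have "\<dots> \<le> real (m choose j)"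
      using that True assms(3) by (simp add: binomial_mono)
    finally have "(real m / 3) ^ 3 \<le> real (m choose j)" .
    then have "real (N j) / real (m choose j) \<le> b / (real m / 3) ^ 3"
      using bound[of j] that \<open>3 \<le> m\<close> \<open>0 \<le> b\<close> by (intro frac_le) auto
    with True show ?thesis by simp
  next
    case False
    then show ?thesis using vanish by simp
  qed
  have "(\<Sum>j=3..m. real (N j) / real (m choose j)) \<le> (\<Sum>j=3..m. if real j \<le> 2 * t then ?c else 0)"
    by (rule sum_mono) (rule summand_le)
  also have "\<dots> = real (card {j\<in>{3..m}. real j \<le> 2 * t}) * ?c"
    by (simp add: sum.If_cases Int_def)
  also have "\<dots> \<le> 2 * t * ?c"
  proof (rule mult_right_mono)
    have "{j\<in>{3..m}. real j \<le> 2 * t} = {j\<in>{3..m}. 0 < j \<and> real j \<le> 2 * t}"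
      by auto
    then show "real (card {j\<in>{3..m}. real j \<le> 2 * t}) \<le> 2 * t"
      using card_positive_nat_le_real[of "2 * t" "{3..m}"] \<open>0 \<le> t\<close> by (simp only:)
    show "0 \<le> ?c"
      using \<open>0 \<le> b\<close> by simp
  qed
  finally show ?thesis by simp
qed

lemma sum_tail_shadow_div_binomial_le:
  fixes N :: "nat \<Rightarrow> nat" and t \<epsilon> :: real
  assumes n_large: "400 \<le> n" and m_large: "49/100 * real n + 2 \<le> real m"
    and t: "0 \<le> t" "t \<le> real n / 200" and "0 \<le> \<epsilon>"
    and N2: "\<And>j. 2 \<le> j \<Longrightarrow> real (N j) \<le> \<epsilon> * real n ^ 2"
    and vanish: "\<And>j. 2 * t < real j \<Longrightarrow> N j = 0"
  shows "(\<Sum>j=3..m. real (N j) / real (m choose j)) \<le> 3 * \<epsilon>"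
proof -
  have n_ge: "400 \<le> real n" and m_ge: "49/100 * real n \<le> real m - 2"
    using n_large m_large by simp_all
  then have "3 \<le> m"
    by linarith
  have "(\<Sum>j=3..m. real (N j) / real (m choose j)) \<le> 2 * t * (\<epsilon> * real n ^ 2) / (real m / 3) ^ 3"
    using \<open>3 \<le> m\<close> t m_ge n_ge N2 vanish by (intro sum_tail_div_binomial_le) auto
  also have "\<dots> \<le> 3 * \<epsilon>"
  proof -
    have "2 * t * real n ^ 2 * 27 \<le> 3 * (49/100 * real n) ^ 3"
      using t n_ge by (simp add: power2_eq_square power3_eq_cube mult_right_mono)
    also have "\<dots> \<le> 3 * real m ^ 3"
      using m_ge n_ge by (intro mult_left_mono power_mono) auto
    finally have "\<epsilon> * (2 * t * real n ^ 2 * 27) \<le> \<epsilon> * (3 * real m ^ 3)"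
      using \<open>0 \<le> \<epsilon>\<close> by (rule mult_left_mono)
    then show ?thesis
      using \<open>3 \<le> m\<close> by (simp add: pos_divide_le_eq power_divide field_simps)
  qed
  finally show ?thesis .
qed

lemma of_nat_choose_two: "real (m choose 2) = real m * (real m - 1) / 2"
proof (cases m)
  case (Suc k)
  then have "(m choose 2) * 2 = m * k"
    using Suc_times_binomial_eq[of k 1] by (simp add: numeral_2_eq_2)
  then have "real (m choose 2) * 2 = real m * real k"
    by (metis of_nat_mult of_nat_numeral)
  then show ?thesis
    using Suc by simp
qed simp

lemma sum_shadow_div_binomial_le:
  fixes N :: "nat \<Rightarrow> nat" and t \<epsilon> :: real
  assumes n_large: "400 \<le> n" and m_large: "49/100 * real n + 2 \<le> real m"
    and t: "0 \<le> t" "t \<le> real n / 200"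
    and N1: "real (N 1) \<le> \<epsilon> * real n"
    and N2: "\<And>j. 2 \<le> j \<Longrightarrow> real (N j) \<le> \<epsilon> * real n ^ 2"
    and vanish: "\<And>j. 2 * t < real j \<Longrightarrow> N j = 0"
  shows "(\<Sum>j=1..m. real (N j) / real (m choose j)) \<le> 15 * \<epsilon>"
proof -
  have n_ge: "400 \<le> real n"
    using n_large by simp
  moreover have "0 \<le> \<epsilon> * real n"
    using N1 by (rule order_trans[rotated]) simp
  ultimately have "0 \<le> \<epsilon>"
    by (simp add: zero_le_mult_iff)
  have m_ge: "49/100 * real n \<le> real m - 2"
    using m_large by simp
  then have "3 \<le> m"
    using n_ge by linarith
  have "real (N 1) / real (m choose 1) \<le> 3 * \<epsilon>"
  proof -
    have "\<epsilon> * real n \<le> \<epsilon> * (3 * real m)"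
      using m_ge n_ge \<open>0 \<le> \<epsilon>\<close> by (intro mult_left_mono) auto
    then have "real (N 1) \<le> 3 * \<epsilon> * real m"
      using N1 by simp
    then show ?thesis
      using \<open>3 \<le> m\<close> by (simp add: pos_divide_le_eq)
  qed
  moreover have "real (N 2) / real (m choose 2) \<le> 9 * \<epsilon>"
  proof -
    have "2 * real n ^ 2 \<le> 9 * ((49/100 * real n) * (49/100 * real n))"
      by (simp add: power2_eq_square)
    also have "\<dots> \<le> 9 * (real m * (real m - 1))"
      using m_ge n_ge by (intro mult_left_mono mult_mono) auto
    finally have "\<epsilon> * (2 * real n ^ 2) \<le> \<epsilon> * (9 * (real m * (real m - 1)))"
      using \<open>0 \<le> \<epsilon>\<close> by (rule mult_left_mono)
    then have "real (N 2) \<le> 9 * \<epsilon> * real (m choose 2)"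
      using N2[of 2] unfolding of_nat_choose_two by simp
    then show ?thesis
      using \<open>3 \<le> m\<close> by (simp add: pos_divide_le_eq)
  qed
  moreover have "(\<Sum>j=3..m. real (N j) / real (m choose j)) \<le> 3 * \<epsilon>"
    using sum_tail_shadow_div_binomial_le[OF n_large m_large t \<open>0 \<le> \<epsilon>\<close> N2 vanish] .
  moreover have "(\<Sum>j=1..m. real (N j) / real (m choose j))
      = real (N 1) / real (m choose 1) + real (N 2) / real (m choose 2)
        + (\<Sum>j=3..m. real (N j) / real (m choose j))"
    using \<open>3 \<le> m\<close> by (simp add: sum.atLeast_Suc_atMost numeral_3_eq_3 numeral_2_eq_2)
  ultimately show ?thesis
    by linarith
qed

lemma powr_two_thirds_le:
  fixes x :: real
  assumes "200 ^ 3 \<le> x"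
  shows "x powr (2/3) \<le> x / 200"
proof -
  have "200 = (200 ^ 3) powr (1/3 :: real)"
    by (simp add: powr_realpow[symmetric] powr_powr)
  also have "\<dots> \<le> x powr (1/3)"
    using assms by (intro powr_mono2) auto
  finally have "x powr (2/3) * 200 \<le> x powr (2/3) * x powr (1/3)"
    by (intro mult_left_mono) auto
  also have "\<dots> = x"
    using assms by (simp add: powr_add[symmetric])
  finally show ?thesis
    by simp
qed

lemma sum_supersets_div_binomial_le:
  fixes \<epsilon> t :: real
  assumes n_large: "400 \<le> n" and t: "0 \<le> t" "t \<le> real n / 200"
    and U: "finite U" "card U = n" "\<F> \<subseteq> Pow U"
    and band: "\<And>G. G \<in> \<F> \<Longrightarrow> real n / 2 - t \<le> real (card G) \<and> real (card G) \<le> real n / 2 + t"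
    and shadow1: "real (nabla 1 \<F> F) \<le> \<epsilon> * real n"
    and shadow2: "\<And>j. 2 \<le> j \<Longrightarrow> real (nabla j \<F> F) \<le> \<epsilon> * real n ^ 2"
    and F: "F \<in> \<F>"
  shows "(\<Sum>G\<in>{G\<in>\<F>. F \<subset> G}. 1 / real ((n - card F) choose (card G - card F))) \<le> 15 * \<epsilon>"
proof -
  have "card F \<le> n"
    using F U by (metis PowD card_mono in_mono)
  have vanish: "nabla j \<F> F = 0" if "2 * t < real j" for j
  proof -
    have "real (card G) \<noteq> real (card F) + real j" if "G \<in> \<F>" for G
      using band[OF that] band[OF F] \<open>2 * t < real j\<close> by linarith
    then have "{G\<in>\<F>. F \<subseteq> G \<and> card G = card F + j} = {}"
      by (metis (mono_tags, lifting) Collect_empty_eq of_nat_add)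
    then show ?thesis
      unfolding nabla_def by (simp only: card.empty)
  qed
  have "(\<Sum>G\<in>{G\<in>\<F>. F \<subset> G}. 1 / real ((n - card F) choose (card G - card F)))
      = (\<Sum>j=1..n - card F. real (nabla j \<F> F) / real ((n - card F) choose j))"
    using sum_proper_supersets_by_nabla[OF U(1,3), of "\<lambda>j. 1 / real ((n - card F) choose j)"] U(2)
    by simp
  also have "\<dots> \<le> 15 * \<epsilon>"
  proof (rule sum_shadow_div_binomial_le[where N = "\<lambda>j. nabla j \<F> F", OF n_large _ t shadow1 shadow2 vanish])
    show "49/100 * real n + 2 \<le> real (n - card F)"
      using band[OF F] t n_large \<open>card F \<le> n\<close> by (simp add: of_nat_diff)
  qed
  finally show ?thesis .
qed

theorem lemma2p4:
  fixes \<epsilon> :: real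
  assumes "\<epsilon> > 0"
  shows "\<exists>n0::nat. \<forall>n\<ge>n0. \<forall>\<F> :: nat set set.
    \<F> \<subseteq> Pow {1..n} \<longrightarrow>
    (\<forall>F\<in>\<F>. real n / 2 - real n powr (2/3) \<le> real (card F) \<and>
              real (card F) \<le> real n / 2 + real n powr (2/3)) \<longrightarrow>
    (\<forall>F\<in>\<F>. real (nabla 1 \<F> F) \<le> \<epsilon> * real n \<and>
              (\<forall>j\<ge>2. real (nabla j \<F> F) \<le> \<epsilon> * real n ^ 2)) \<longrightarrow>
    real (card \<F>) \<le> (1 + 15 * \<epsilon>) * real (n choose (n div 2))"
proof (intro exI[of _ "200 ^ 3"] allI impI)
  fix n :: nat and \<F> :: "nat set set"
  assume n_large: "200 ^ 3 \<le> n" and \<F>: "\<F> \<subseteq> Pow {1..n}"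
    and band: "\<forall>F\<in>\<F>. real n / 2 - real n powr (2/3) \<le> real (card F) \<and>
              real (card F) \<le> real n / 2 + real n powr (2/3)"
    and shadow: "\<forall>F\<in>\<F>. real (nabla 1 \<F> F) \<le> \<epsilon> * real n \<and>
              (\<forall>j\<ge>2. real (nabla j \<F> F) \<le> \<epsilon> * real n ^ 2)"
  have "real n powr (2/3) \<le> real n / 200"
    using n_large by (intro powr_two_thirds_le) simp
  then have "(\<Sum>G\<in>{G\<in>\<F>. F \<subset> G}. 1 / real ((n - card F) choose (card G - card F))) \<le> 15 * \<epsilon>"
    if "F \<in> \<F>" for F
    using n_large \<F> band shadow that
    by (intro sum_supersets_div_binomial_le[of n _ "{1..n}"]) auto
  then have "(\<Sum>F\<in>\<F>. 1 / real (n choose card F)) \<le> 1 + 15 * \<epsilon>"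
    using LYM_inequality_overlaps[OF _ \<F>, of "15 * \<epsilon>"] \<open>\<epsilon> > 0\<close> by simp
  moreover have "real (card \<F>) \<le> (\<Sum>F\<in>\<F>. 1 / real (n choose card F)) * real (n choose (n div 2))"
    using card_le_LYM_sum_mult_central_binomial[OF _ \<F>] by simp
  ultimately show "real (card \<F>) \<le> (1 + 15 * \<epsilon>) * real (n choose (n div 2))"
    by (meson mult_right_mono of_nat_0_le_iff order_trans)
qed

end
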